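(* Let $\mathbf e=(1,1)$, $X=[-\frac34,\frac54]^2$, $Y=[-10,10]^2$, and for $\rho>0$ define on $X\times Y$ $$\psi_\rho(x,y)=\Big(\frac{\|x\|^2}{2}-1\Big)^2-\frac{\|y-\mathbf e\|^2}{2}+\frac{x^\top y}{2}-\frac\rho2\big[\mathbf e^\top y-\|x\|^2\big]_+^2 .$$ For every $\rho>1$, the problem $\min_{x\in X}\max_{y\in Y}\psi_\rho(x,y)$ has a unique first-order minimax (stationary) point $(x,y)\in X\times Y$, i.e. a unique point satisfying $0\in\nabla_x\psi_\rho(x,y)+\mathcal N_X(x)$ and $0\in-\nabla_y\psi_\rho(x,y)+\mathcal N_Y(y)$, namely $$(x,y)=\Big(-\tfrac34\mathbf e,\ \tfrac{10+18\rho}{16+32\rho}\mathbf e\Big),$$ which converges to $(-\frac34\mathbf e,\frac9{16}\mathbf e)$ as $\rho\to\infty$.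
   Context: $[z]_+=\max\{z,0\}$. $\mathcal N_C(z)=\{v:\langle v,z'-z\rangle\le0\ \forall z'\in C\}$ is the normal cone of a convex set $C$ at $z\in C$. *)

theory Defs
  imports "HOL-Analysis.Analysis"
begin

definition pos_part :: "real \<Rightarrow> real" where
  "pos_part z = max z 0"

definition normal_cone :: "'a::real_inner set \<Rightarrow> 'a \<Rightarrow> 'a set" where
  "normal_cone C z = {v. \<forall>z'\<in>C. inner v (z' - z) \<le> 0}"

definition e_vec :: "real ^ 2" where
  "e_vec = vector [1, 1]"

definition X_set :: "(real ^ 2) set" where
  "X_set = {x. \<forall>i. -(3/4) \<le> x $ i \<and> x $ i \<le> 5/4}"

definition Y_set :: "(real ^ 2) set" where
  "Y_set = {y. \<forall>i. -10 \<le> y $ i \<and> y $ i \<le> 10}"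

definition psi :: "real \<Rightarrow> real ^ 2 \<Rightarrow> real ^ 2 \<Rightarrow> real" where
  "psi \<rho> x y = ((norm x)\<^sup>2 / 2 - 1)\<^sup>2 - (norm (y - e_vec))\<^sup>2 / 2 + inner x y / 2
      - \<rho> / 2 * (pos_part (inner e_vec y - (norm x)\<^sup>2))\<^sup>2"

definition is_gradient :: "('a::real_inner \<Rightarrow> real) \<Rightarrow> 'a \<Rightarrow> 'a \<Rightarrow> bool" where
  "is_gradient f g z \<longleftrightarrow> (f has_derivative (\<lambda>h. inner g h)) (at z)"

definition minimax_stationary :: "real \<Rightarrow> real ^ 2 \<Rightarrow> real ^ 2 \<Rightarrow> bool" where
  "minimax_stationary \<rho> x y \<longleftrightarrow> x \<in> X_set \<and> y \<in> Y_set \<and>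
     (\<exists>gx gy. is_gradient (\<lambda>x'. psi \<rho> x' y) gx x \<and> is_gradient (\<lambda>y'. psi \<rho> x y') gy y \<and>
        (\<exists>v\<in>normal_cone X_set x. gx + v = 0) \<and>
        (\<exists>w\<in>normal_cone Y_set y. - gy + w = 0))"

end

theory Submission
  imports Defs "HOL-Real_Asymp.Real_Asymp"
begin

(* Both partial gradients of psi are explicit, and the normal cone of a box is described by
   coordinatewise sign conditions, so stationarity is a finite system of (in)equalities.
   The conditions in y force y to lie in the interior with y_i = 1 + x_i/2 - rho s, where
   s = [e'y - |x|^2]_+; then s is the fixed point s = [a - 2 rho s]_+ with a >= 1/8 on X,
   so s = a / (1 + 2 rho), and q = 2 rho s lies strictly between 2a/3 and a once rho > 1.
   The x-gradient then has coordinates x_i (|x|^2 - 7/4 + q) + (2 - q)/4. A coordinate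
   strictly above -3/4 would make it vanish, and its partner is then either equal to it or
   at -3/4; in both cases a sum-of-squares identity shows the expression is positive.
   Hence x = -3/4 e, and y is read off from the interior equation. *)

lemma has_real_derivative_pos_part_square:
  "((\<lambda>t. (pos_part t)\<^sup>2) has_real_derivative 2 * pos_part t) (at t)"
proof (cases t "0::real" rule: linorder_cases)
  case less
  have "((\<lambda>_. 0) has_real_derivative 2 * pos_part t) (at t)"
    using less by (simp add: pos_part_def)
  then show ?thesis
    by (rule has_field_derivative_transform_within_open[of _ _ _ "{..<0}"])
       (use less in \<open>auto simp: pos_part_def\<close>)
next
  case equal
  have "((\<lambda>h. (pos_part h)\<^sup>2 / h) \<longlongrightarrow> 0) (at 0)"
  proof (rule Lim_transform_eventually)
    show "((\<lambda>h::real. max h 0) \<longlongrightarrow> 0) (at 0)"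
      using tendsto_max[OF tendsto_ident_at tendsto_const, of 0 0] by simp
    show "\<forall>\<^sub>F h in at 0. max h 0 = (pos_part h)\<^sup>2 / h"
      by (auto simp: eventually_at_filter pos_part_def max_def power2_eq_square)
  qed
  then show ?thesis
    using equal by (simp add: DERIV_def pos_part_def)
next
  case greater
  have "((\<lambda>t. t\<^sup>2) has_real_derivative 2 * pos_part t) (at t)"
    using greater by (auto intro!: derivative_eq_intros simp: pos_part_def)
  then show ?thesis
    by (rule has_field_derivative_transform_within_open[of _ _ _ "{0<..}"])
       (use greater in \<open>auto simp: pos_part_def\<close>)
qed

lemma has_derivative_pos_part_square [derivative_intros]:
  assumes "(f has_derivative f') (at x within S)"
  shows "((\<lambda>x. (pos_part (f x))\<^sup>2) has_derivative (\<lambda>h. 2 * pos_part (f x) * f' h)) (at x within S)"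
  using has_derivative_compose[OF assms has_real_derivative_pos_part_square[unfolded has_field_derivative_def]]
  by (simp add: mult.assoc)

lemma is_gradient_unique:
  assumes "is_gradient f g z" and "is_gradient f g' z"
  shows "g = g'"
proof -
  have "(\<lambda>h. inner g h) = (\<lambda>h. inner g' h)"
    using assms has_derivative_unique unfolding is_gradient_def by blast
  then have "inner (g - g') (g - g') = 0"
    by (metis inner_diff_left right_minus_eq)
  then show ?thesis
    by simp
qed

lemma normal_cone_box_cart:
  fixes x v :: "real ^ 'n"
  assumes x: "\<forall>i. lo i \<le> x $ i \<and> x $ i \<le> hi i"
  shows "v \<in> normal_cone {z. \<forall>i. lo i \<le> z $ i \<and> z $ i \<le> hi i} x \<longleftrightarrow>
         (\<forall>i. (lo i < x $ i \<longrightarrow> 0 \<le> v $ i) \<and> (x $ i < hi i \<longrightarrow> v $ i \<le> 0))"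
    (is "v \<in> normal_cone ?B x \<longleftrightarrow> ?signs")
proof
  assume v: "v \<in> normal_cone ?B x"
  have coordinate: "v $ i * (t - x $ i) \<le> 0" if "lo i \<le> t" "t \<le> hi i" for i t
  proof -
    have "x + (t - x $ i) *\<^sub>R axis i 1 \<in> ?B"
      using x that by (auto simp: axis_def)
    then have "inner v ((x + (t - x $ i) *\<^sub>R axis i 1) - x) \<le> 0"
      using v unfolding normal_cone_def by blast
    then show ?thesis
      by (simp add: inner_axis mult.commute)
  qed
  show ?signs
  proof (intro allI conjI impI)
    fix i
    assume "lo i < x $ i"
    then show "0 \<le> v $ i"
      using coordinate[of i "lo i"] x[rule_format, of i] by (auto simp: mult_le_0_iff)
  next
    fix i
    assume "x $ i < hi i"
    then show "v $ i \<le> 0"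
      using coordinate[of i "hi i"] x[rule_format, of i] by (auto simp: mult_le_0_iff)
  qed
next
  assume signs: ?signs
  have "inner v (z - x) \<le> 0" if z: "z \<in> ?B" for z
  proof -
    have "v $ i * (z $ i - x $ i) \<le> 0" for i
    proof -
      have "lo i \<le> z $ i" "z $ i \<le> hi i" "lo i \<le> x $ i" "x $ i \<le> hi i"
        using z x by auto
      then show ?thesis
        using signs by (cases "z $ i" "x $ i" rule: linorder_cases) (auto simp: mult_le_0_iff)
    qed
    then show ?thesis
      by (simp add: inner_vec_def sum_nonpos)
  qed
  then show "v \<in> normal_cone ?B x"
    unfolding normal_cone_def by blast
qed

lemma e_vec_nth [simp]: "e_vec $ i = 1"
  using exhaust_2[of i] by (auto simp: e_vec_def)

lemma inner_e_vec: "inner e_vec y = y $ 1 + y $ 2"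
  by (simp add: inner_vec_def sum_2)

lemma norm_vec2_square: "(norm (x :: real ^ 2))\<^sup>2 = (x $ 1)\<^sup>2 + (x $ 2)\<^sup>2"
  unfolding power2_norm_eq_inner by (simp add: inner_vec_def sum_2 power2_eq_square)

definition penalty_excess :: "real ^ 2 \<Rightarrow> real ^ 2 \<Rightarrow> real" where
  "penalty_excess x y = pos_part (inner e_vec y - (norm x)\<^sup>2)"

definition psi_grad_x :: "real \<Rightarrow> real ^ 2 \<Rightarrow> real ^ 2 \<Rightarrow> real ^ 2" where
  "psi_grad_x \<rho> x y = ((norm x)\<^sup>2 - 2 + 2 * \<rho> * penalty_excess x y) *\<^sub>R x + (1/2) *\<^sub>R y"

definition psi_grad_y :: "real \<Rightarrow> real ^ 2 \<Rightarrow> real ^ 2 \<Rightarrow> real ^ 2" where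
  "psi_grad_y \<rho> x y = e_vec - y + (1/2) *\<^sub>R x - (\<rho> * penalty_excess x y) *\<^sub>R e_vec"

lemma is_gradient_psi_x: "is_gradient (\<lambda>x'. psi \<rho> x' y) (psi_grad_x \<rho> x y) x"
  unfolding is_gradient_def psi_def psi_grad_x_def penalty_excess_def power2_norm_eq_inner
  by (rule has_derivative_eq_rhs, (rule has_derivative_pos_part_square derivative_eq_intros refl | simp)+)
     (simp add: fun_eq_iff inner_commute algebra_simps diff_divide_distrib)

lemma is_gradient_psi_y: "is_gradient (\<lambda>y'. psi \<rho> x y') (psi_grad_y \<rho> x y) y"
  unfolding is_gradient_def psi_def psi_grad_y_def penalty_excess_def power2_norm_eq_inner
  by (rule has_derivative_eq_rhs, (rule has_derivative_pos_part_square derivative_eq_intros refl | simp)+)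
     (simp add: fun_eq_iff inner_commute algebra_simps diff_divide_distrib)

lemma minimax_stationary_iff_normal_cone:
  "minimax_stationary \<rho> x y \<longleftrightarrow> x \<in> X_set \<and> y \<in> Y_set \<and>
     - psi_grad_x \<rho> x y \<in> normal_cone X_set x \<and> psi_grad_y \<rho> x y \<in> normal_cone Y_set y"
proof
  assume "minimax_stationary \<rho> x y"
  then obtain gx gy v w where "x \<in> X_set" "y \<in> Y_set"
    and "is_gradient (\<lambda>x'. psi \<rho> x' y) gx x" "is_gradient (\<lambda>y'. psi \<rho> x y') gy y"
    and "v \<in> normal_cone X_set x" "gx + v = 0" "w \<in> normal_cone Y_set y" "- gy + w = 0"
    unfolding minimax_stationary_def by blast
  moreover have "gx = psi_grad_x \<rho> x y" "gy = psi_grad_y \<rho> x y"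
    using calculation is_gradient_psi_x is_gradient_psi_y is_gradient_unique by blast+
  ultimately show "x \<in> X_set \<and> y \<in> Y_set \<and>
     - psi_grad_x \<rho> x y \<in> normal_cone X_set x \<and> psi_grad_y \<rho> x y \<in> normal_cone Y_set y"
    by (metis add.commute add_eq_0_iff neg_eq_iff_add_eq_0)
next
  assume "x \<in> X_set \<and> y \<in> Y_set \<and>
     - psi_grad_x \<rho> x y \<in> normal_cone X_set x \<and> psi_grad_y \<rho> x y \<in> normal_cone Y_set y"
  then show "minimax_stationary \<rho> x y"
    unfolding minimax_stationary_def using is_gradient_psi_x is_gradient_psi_y by force
qed

lemma minimax_stationary_iff_kkt:
  "minimax_stationary \<rho> x y \<longleftrightarrow> x \<in> X_set \<and> y \<in> Y_set \<and>
     (\<forall>i. (-(3/4) < x $ i \<longrightarrow> psi_grad_x \<rho> x y $ i \<le> 0) \<and>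
          (x $ i < 5/4 \<longrightarrow> 0 \<le> psi_grad_x \<rho> x y $ i)) \<and>
     (\<forall>i. (-10 < y $ i \<longrightarrow> 0 \<le> psi_grad_y \<rho> x y $ i) \<and>
          (y $ i < 10 \<longrightarrow> psi_grad_y \<rho> x y $ i \<le> 0))"
proof -
  have "- g \<in> normal_cone X_set x \<longleftrightarrow>
      (\<forall>i. (-(3/4) < x $ i \<longrightarrow> g $ i \<le> 0) \<and> (x $ i < 5/4 \<longrightarrow> 0 \<le> g $ i))"
    if "x \<in> X_set" for g
    using that unfolding X_set_def by (subst normal_cone_box_cart) auto
  moreover have "g \<in> normal_cone Y_set y \<longleftrightarrow>
      (\<forall>i. (-10 < y $ i \<longrightarrow> 0 \<le> g $ i) \<and> (y $ i < 10 \<longrightarrow> g $ i \<le> 0))"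
    if "y \<in> Y_set" for g
    using that unfolding Y_set_def by (subst normal_cone_box_cart) auto
  ultimately show ?thesis
    unfolding minimax_stationary_iff_normal_cone by blast
qed

lemma pos_part_fixed_point:
  fixes a c s :: real
  assumes "0 < a" "0 \<le> c" "s = pos_part (a - c * s)"
  shows "s = a / (1 + c)"
proof -
  have "0 < s"
    using assms by (cases "s = 0") (auto simp: pos_part_def)
  then have "s = a - c * s"
    using assms(3) by (simp add: pos_part_def max_def split: if_splits)
  then show ?thesis
    using assms(2) by (simp add: field_simps)
qed

(* In both certificates the sign of u - 1/4, the coefficient of q, decides which of the
   two bounds on q is used. *)
lemma x_gradient_pos_diagonal:
  fixes u q :: real
  defines "a \<equiv> 2 + u - 2 * u\<^sup>2"
  assumes "2 * a < 3 * q" and "q < a"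
  shows "0 < u * (2 * u\<^sup>2 - 7/4 + q) + (2 - q) / 4"
proof (cases "u < 1/4")
  case True
  have "u * (2 * u\<^sup>2 - 7/4 + q) + (2 - q) / 4 = 3/2 * u\<^sup>2 + (a - q) * (1/4 - u)"
    unfolding a_def by (simp add: field_simps power2_eq_square)
  moreover have "0 < (a - q) * (1/4 - u)"
    using True assms by simp
  moreover have "0 \<le> u\<^sup>2"
    by simp
  ultimately show ?thesis
    by linarith
next
  case False
  have "u * (2 * u\<^sup>2 - 7/4 + q) + (2 - q) / 4
      = 2/3 * u ^ 3 + (u - 7/24)\<^sup>2 + 47/576 + (q - 2/3 * a) * (u - 1/4)"
    unfolding a_def by (simp add: field_simps power2_eq_square power3_eq_cube)
  moreover have "0 \<le> u ^ 3" "0 \<le> (q - 2/3 * a) * (u - 1/4)" "0 \<le> (u - 7/24)\<^sup>2"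
    using False assms by simp_all
  ultimately show ?thesis
    by linarith
qed

lemma x_gradient_pos_corner:
  fixes u q :: real
  defines "a \<equiv> 17/16 + u / 2 - u\<^sup>2"
  assumes "2 * a < 3 * q" and "q < a"
  shows "0 < u * (u\<^sup>2 + 9/16 - 7/4 + q) + (2 - q) / 4"
proof (cases "u < 1/4")
  case True
  have "u * (u\<^sup>2 + 9/16 - 7/4 + q) + (2 - q) / 4 = 3/4 * (u - 1/6)\<^sup>2 + 41/192 + (a - q) * (1/4 - u)"
    unfolding a_def by (simp add: field_simps power2_eq_square)
  moreover have "0 < (a - q) * (1/4 - u)"
    using True assms by simp
  moreover have "0 \<le> (u - 1/6)\<^sup>2"
    by simp
  ultimately show ?thesis
    by linarith
next
  case False
  have "u * (u\<^sup>2 + 9/16 - 7/4 + q) + (2 - q) / 4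
      = 1/3 * u ^ 3 + 1/2 * (u - 9/16)\<^sup>2 + 253/1536 + (q - 2/3 * a) * (u - 1/4)"
    unfolding a_def by (simp add: field_simps power2_eq_square power3_eq_cube)
  moreover have "0 \<le> u ^ 3" "0 \<le> (q - 2/3 * a) * (u - 1/4)" "0 \<le> (u - 9/16)\<^sup>2"
    using False assms by simp_all
  ultimately show ?thesis
    by linarith
qed

lemma x_gradient_roots_coincide:
  fixes N q u w :: real
  assumes "0 \<le> N"
    and "u * (N - 7/4 + q) + (2 - q) / 4 = 0" and "w * (N - 7/4 + q) + (2 - q) / 4 = 0"
  shows "w = u"
proof -
  have "N - 7/4 + q \<noteq> 0"
  proof
    assume "N - 7/4 + q = 0"
    moreover have "q = 2"
      using assms(2) calculation by simp
    ultimately show False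
      using assms(1) by linarith
  qed
  moreover have "(u - w) * (N - 7/4 + q) = 0"
    using assms(2,3) by (simp add: field_simps)
  ultimately show ?thesis
    by simp
qed

(* u and w are the two coordinates of x, and g is the x-gradient once y and the penalty
   excess s have been eliminated, with q = 2 rho s. *)
lemma x_coordinate_at_lower_bound:
  fixes u w q :: real
  defines "N \<equiv> u\<^sup>2 + w\<^sup>2"
  defines "g \<equiv> \<lambda>t. t * (N - 7/4 + q) + (2 - q) / 4"
    and "a \<equiv> 2 + (u + w) / 2 - N"
  assumes u: "-(3/4) \<le> u" "u \<le> 5/4" and w: "-(3/4) \<le> w" "w \<le> 5/4"
    and q: "0 \<le> q" "2 * a < 3 * q" "q < a"
    and kkt_u: "-(3/4) < u \<Longrightarrow> g u \<le> 0" "u < 5/4 \<Longrightarrow> 0 \<le> g u"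
    and kkt_w: "-(3/4) < w \<Longrightarrow> g w \<le> 0" "w < 5/4 \<Longrightarrow> 0 \<le> g w"
  shows "u = -(3/4)"
proof -
  have "0 \<le> N"
    by (simp add: N_def)
  have g_upper_pos: "0 < g (5/4)" if "u = 5/4 \<or> w = 5/4"
  proof -
    have "(5/4)\<^sup>2 \<le> N"
      using that unfolding N_def by (metis add_increasing add_increasing2 order_refl zero_le_power2)
    then show ?thesis
      using q(1) unfolding g_def by (simp add: field_simps)
  qed
  have "u \<noteq> 5/4" "w \<noteq> 5/4"
    using g_upper_pos kkt_u(1) kkt_w(1) by force+
  then have "u < 5/4" "w < 5/4"
    using u(2) w(2) by simp_all
  then have gu: "0 \<le> g u" and gw: "0 \<le> g w"
    using kkt_u(2) kkt_w(2) by blast+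
  show ?thesis
  proof (rule ccontr)
    assume "u \<noteq> -(3/4)"
    then have "-(3/4) < u"
      using u(1) by simp
    then have "g u = 0"
      using kkt_u(1) gu by (blast intro: order.antisym)
    show False
    proof (cases "w = -(3/4)")
      case True
      have "a = 17/16 + u / 2 - u\<^sup>2" "g u = u * (u\<^sup>2 + 9/16 - 7/4 + q) + (2 - q) / 4"
        unfolding a_def g_def N_def True by (simp_all add: power2_eq_square field_simps)
      then show False
        using x_gradient_pos_corner[of u q] \<open>g u = 0\<close> q by simp
    next
      case False
      then have "-(3/4) < w"
        using w(1) by simp
      then have "g w = 0"
        using kkt_w(1) gw by (blast intro: order.antisym)
      then have "w = u"
        using x_gradient_roots_coincide[of N u q w] \<open>0 \<le> N\<close> \<open>g u = 0\<close>
        unfolding g_def by simp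
      then have "a = 2 + u - 2 * u\<^sup>2" "g u = u * (2 * u\<^sup>2 - 7/4 + q) + (2 - q) / 4"
        unfolding a_def g_def N_def by simp_all
      then show False
        using x_gradient_pos_diagonal[of u q] \<open>g u = 0\<close> q by simp
    qed
  qed
qed

lemma kkt_y_coordinate:
  assumes "0 \<le> \<rho>" "x \<in> X_set" "y \<in> Y_set"
    and "-10 < y $ i \<Longrightarrow> 0 \<le> psi_grad_y \<rho> x y $ i"
    and "y $ i < 10 \<Longrightarrow> psi_grad_y \<rho> x y $ i \<le> 0"
  shows "y $ i = 1 + x $ i / 2 - \<rho> * penalty_excess x y"
proof -
  define s where "s = penalty_excess x y"
  have grad: "psi_grad_y \<rho> x y $ i = 1 - y $ i + x $ i / 2 - \<rho> * s"
    by (simp add: psi_grad_y_def s_def)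
  have "0 \<le> \<rho> * s"
    using assms(1) by (simp add: s_def penalty_excess_def pos_part_def)
  have x: "-(3/4) \<le> x $ i" "x $ i \<le> 5/4"
    using assms(2) by (auto simp: X_set_def)
  have y: "-10 \<le> y $ j" "y $ j \<le> 10" for j
    using assms(3) by (auto simp: Y_set_def)
  have "y $ i \<noteq> 10"
    using assms(4) grad x \<open>0 \<le> \<rho> * s\<close> by force
  moreover have "y $ i \<noteq> -10"
  proof
    assume "y $ i = -10"
    then have "inner e_vec y \<le> 0"
      using y exhaust_2[of i] by (auto simp: inner_e_vec)
    then have "inner e_vec y \<le> (norm x)\<^sup>2"
      by (meson order_trans zero_le_power2)
    then have "s = 0"
      by (simp add: s_def penalty_excess_def pos_part_def)
    then show False
      using assms(5) grad x \<open>y $ i = -10\<close> by simp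
  qed
  ultimately have "psi_grad_y \<rho> x y $ i = 0"
    using assms(4,5) y[of i] by force
  then show ?thesis
    using grad s_def by simp
qed

lemma X_set_excess_lower_bound:
  assumes "x \<in> X_set"
  shows "1/8 \<le> 2 + (x $ 1 + x $ 2) / 2 - ((x $ 1)\<^sup>2 + (x $ 2)\<^sup>2)"
proof -
  have "0 \<le> (x $ i + 3/4) * (5/4 - x $ i)" for i
  proof -
    have "-(3/4) \<le> x $ i" "x $ i \<le> 5/4"
      using assms by (auto simp: X_set_def)
    then show ?thesis
      by simp
  qed
  from this[of 1] this[of 2] show ?thesis
    by (simp add: field_simps power2_eq_square)
qed

lemma minimax_stationary_imp_solution:
  assumes "1 < \<rho>" and "minimax_stationary \<rho> x y"
  shows "x = (-(3/4)) *\<^sub>R e_vec \<and> y = ((10 + 18 * \<rho>) / (16 + 32 * \<rho>)) *\<^sub>R e_vec"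
proof -
  define s where "s = penalty_excess x y"
  define q where "q = 2 * \<rho> * s"
  define a where "a = 2 + (x $ 1 + x $ 2) / 2 - ((x $ 1)\<^sup>2 + (x $ 2)\<^sup>2)"
  note kkt = assms(2)[unfolded minimax_stationary_iff_kkt]
  have x_bounds: "-(3/4) \<le> x $ i" "x $ i \<le> 5/4" for i
    using kkt by (auto simp: X_set_def)
  have y_eq: "y $ i = 1 + x $ i / 2 - \<rho> * s" for i
    using kkt_y_coordinate[of \<rho> x y i] kkt assms(1) s_def by simp
  have "s = pos_part (y $ 1 + y $ 2 - ((x $ 1)\<^sup>2 + (x $ 2)\<^sup>2))"
    by (simp add: s_def penalty_excess_def inner_e_vec norm_vec2_square)
  also have "y $ 1 + y $ 2 - ((x $ 1)\<^sup>2 + (x $ 2)\<^sup>2) = a - 2 * \<rho> * s"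
    unfolding y_eq a_def by simp
  finally have "s = pos_part (a - 2 * \<rho> * s)" .
  moreover have "1/8 \<le> a"
    using kkt X_set_excess_lower_bound a_def by blast
  ultimately have s_eq: "s = a / (1 + 2 * \<rho>)"
    using pos_part_fixed_point[of a "2 * \<rho>" s] assms(1) by (simp add: mult.assoc)
  have q: "0 \<le> q" "2 * a < 3 * q" "q < a"
    using assms(1) \<open>1/8 \<le> a\<close> by (simp_all add: q_def s_eq field_simps)
  have grad_x: "psi_grad_x \<rho> x y $ i = x $ i * ((x $ 1)\<^sup>2 + (x $ 2)\<^sup>2 - 7/4 + q) + (2 - q) / 4" for i
    by (simp add: psi_grad_x_def norm_vec2_square y_eq q_def s_def[symmetric] field_simps)
  have swap: "x $ 2 + x $ 1 = x $ 1 + x $ 2" "(x $ 2)\<^sup>2 + (x $ 1)\<^sup>2 = (x $ 1)\<^sup>2 + (x $ 2)\<^sup>2"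
    by simp_all
  have x1: "x $ 1 = -(3/4)"
    using x_coordinate_at_lower_bound[of "x $ 1" "x $ 2" q] x_bounds q kkt
    by (simp add: grad_x a_def)
  have x2: "x $ 2 = -(3/4)"
    using x_coordinate_at_lower_bound[of "x $ 2" "x $ 1" q, unfolded swap] x_bounds q kkt
    by (simp add: grad_x a_def)
  have "a = 1/8"
    using x1 x2 unfolding a_def by (simp add: power2_eq_square)
  then have "\<rho> * s = \<rho> / (8 + 16 * \<rho>)"
    using assms(1) by (simp add: s_eq field_simps)
  moreover have "1 - 3/8 - \<rho> / (8 + 16 * \<rho>) = (10 + 18 * \<rho>) / (16 + 32 * \<rho>)"
    using assms(1) by (simp add: field_simps)
  ultimately show ?thesis
    using x1 x2 y_eq by (simp add: vec_eq_iff forall_2)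
qed

lemma minimax_stationary_solution:
  assumes "0 \<le> \<rho>"
  shows "minimax_stationary \<rho> ((-(3/4)) *\<^sub>R e_vec) (((10 + 18 * \<rho>) / (16 + 32 * \<rho>)) *\<^sub>R e_vec)"
proof -
  define x :: "real ^ 2" where "x = (-(3/4)) *\<^sub>R e_vec"
  define c where "c = (10 + 18 * \<rho>) / (16 + 32 * \<rho>)"
  define y :: "real ^ 2" where "y = c *\<^sub>R e_vec"
  have xy: "x $ i = -(3/4)" "y $ i = c" for i
    by (simp_all add: x_def y_def)
  have c: "0 < c" "c < 1" "2 * c - 9/8 = 1 / (8 + 16 * \<rho>)"
    using assms by (simp_all add: c_def field_simps)
  have norm_x: "(norm x)\<^sup>2 = 9/8"
    unfolding norm_vec2_square by (simp add: xy power2_eq_square)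
  have "inner e_vec y - (norm x)\<^sup>2 = 2 * c - 9/8"
    unfolding inner_e_vec norm_x by (simp add: xy)
  then have excess: "penalty_excess x y = 1 / (8 + 16 * \<rho>)"
    using c(3) assms by (simp add: penalty_excess_def pos_part_def)
  define t where "t = \<rho> * penalty_excess x y"
  have t: "t = 5/8 - c" "t < 1/16"
    unfolding t_def excess c_def using assms by (simp_all add: field_simps)
  have "psi_grad_y \<rho> x y $ i = 5/8 - c - t"
    and "psi_grad_x \<rho> x y $ i = (9/8 - 2 + 2 * t) * (-(3/4)) + c/2" for i
    by (simp_all add: psi_grad_x_def psi_grad_y_def xy norm_x t_def)
  then have "psi_grad_y \<rho> x y $ i = 0" and "0 < psi_grad_x \<rho> x y $ i" for i
    using t c(1) by simp_all
  moreover have "x \<in> X_set" "y \<in> Y_set"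
    using c by (simp_all add: X_set_def Y_set_def xy)
  ultimately show ?thesis
    unfolding minimax_stationary_iff_kkt x_def y_def c_def by (simp add: less_imp_le)
qed

theorem lemma4p1:
  shows "(\<forall>\<rho>>1. {(x, y). minimax_stationary \<rho> x y} =
            {((-(3/4)) *\<^sub>R e_vec, ((10 + 18 * \<rho>) / (16 + 32 * \<rho>)) *\<^sub>R e_vec)})
       \<and> ((\<lambda>\<rho>. ((-(3/4)) *\<^sub>R e_vec, ((10 + 18 * \<rho>) / (16 + 32 * \<rho>)) *\<^sub>R e_vec))
            \<longlongrightarrow> ((-(3/4)) *\<^sub>R e_vec, (9/16) *\<^sub>R e_vec)) at_top"
proof
  show "\<forall>\<rho>>1. {(x, y). minimax_stationary \<rho> x y} =
            {((-(3/4)) *\<^sub>R e_vec, ((10 + 18 * \<rho>) / (16 + 32 * \<rho>)) *\<^sub>R e_vec)}"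
    using minimax_stationary_imp_solution minimax_stationary_solution by fastforce
  have "((\<lambda>\<rho>::real. (10 + 18 * \<rho>) / (16 + 32 * \<rho>)) \<longlongrightarrow> 9/16) at_top"
    by real_asymp
  then show "((\<lambda>\<rho>. ((-(3/4)) *\<^sub>R e_vec, ((10 + 18 * \<rho>) / (16 + 32 * \<rho>)) *\<^sub>R e_vec))
            \<longlongrightarrow> ((-(3/4)) *\<^sub>R e_vec, (9/16) *\<^sub>R e_vec)) at_top"
    by (rule tendsto_Pair[OF tendsto_const tendsto_scaleR[OF _ tendsto_const]])
qed

end
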